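(* In the fine-grained calculus $\lambda^{dFG}$ (with flow-insensitive references), for all stores $\Sigma,\Sigma'$, expressions $e$, environments $\theta$, labels $pc,\ell$ and raw values $r$: if $\langle\Sigma,e\rangle\Downarrow^{\theta}_{pc}\langle\Sigma',r^{\ell}\rangle$ then $pc\sqsubseteq\ell$.
   Context: Fix a lattice $(\mathcal{L},\sqsubseteq,\sqcup)$ of labels. $\lambda^{dFG}$ has expressions $e::=x\mid\lambda x.e\mid e_1\,e_2\mid()\mid\ell\mid(e_1,e_2)\mid\mathbf{fst}(e)\mid\mathbf{snd}(e)\mid\mathbf{inl}(e)\mid\mathbf{inr}(e)\mid\mathbf{case}(e,x.e_1,x.e_2)\mid\mathbf{getLabel}\mid\mathbf{labelOf}(e)\mid e_1\sqsubseteq^{?}e_2\mid\mathbf{taint}(e_1,e_2)\mid\mathbf{new}(e)\mid\,!e\mid e_1:=e_2\mid\mathbf{labelOfRef}(e)$, raw values $r::=()\mid(x.e,\theta)\mid\mathbf{inl}(v)\mid\mathbf{inr}(v)\mid(v_1,v_2)\mid\ell\mid n_\ell$, values $v::=r^\ell$, environments $\theta$ finite maps from variables to values; $r^{\ell}\sqcup\ell'=r^{\ell\sqcup\ell'}$. A store $\Sigma$ maps each label to a finite list (memory) of raw values; $|M|$, $M[n]$, $M[n\mapsto r]$ denote length, $n$-th entry (from 0) and replacement (append if $n=|M|$). Evaluation $\langle\Sigma,e\rangle\Downarrow^\theta_{pc}\langle\Sigma',v\rangle$ is the least relation closed under (store threaded left to right; "$e\Downarrow v$" uses current $\theta,pc$):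 $x\Downarrow\theta(x)\sqcup pc$; $()\Downarrow()^{pc}$; $\ell\Downarrow\ell^{pc}$; $\lambda x.e\Downarrow(x.e,\theta)^{pc}$; $\mathbf{getLabel}\Downarrow pc^{pc}$; $e_1e_2\Downarrow v$ if $e_1\Downarrow(x.e,\theta')^\ell$, $e_2\Downarrow v_2$, and $e$ gives $v$ in $\theta'[x\mapsto v_2]$ at program counter $pc\sqcup\ell$; $\mathbf{inl}(e)\Downarrow\mathbf{inl}(v)^{pc}$, $\mathbf{inr}(e)\Downarrow\mathbf{inr}(v)^{pc}$ if $e\Downarrow v$; $\mathbf{case}(e,x.e_1,x.e_2)\Downarrow v$ if $e\Downarrow\mathbf{inl}(v_1)^\ell$ and $e_1$ gives $v$ in $\theta[x\mapsto v_1]$ at $pc\sqcup\ell$ (symmetrically for $\mathbf{inr}$ and $e_2$); $(e_1,e_2)\Downarrow(v_1,v_2)^{pc}$; if $e\Downarrow(v_1,v_2)^\ell$ then $\mathbf{fst}(e)\Downarrow v_1\sqcup\ell$, $\mathbf{snd}(e)\Downarrow v_2\sqcup\ell$; $\mathbf{labelOf}(e)\Downarrow\ell^\ell$ if $e\Downarrow r^\ell$; if $e_1\Downarrow\ell_1^{\ell_1'}$, $e_2\Downarrow\ell_2^{\ell_2'}$ then $e_1\sqsubseteq^?e_2\Downarrow\mathbf{inl}(()^{pc})^{\ell_1'\sqcup\ell_2'}$ when $\ell_1\sqsubseteq\ell_2$ and $\mathbf{inr}(()^{pc})^{\ell_1'\sqcup\ell_2'}$ otherwise; $\mathbf{taint}(e_1,e_2)\Downarrow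 v$ if $e_1\Downarrow\ell^{\ell'}$, $\ell'\sqsubseteq\ell$, and $e_2$ gives $v$ at program counter $\ell$; $\mathbf{new}(e)\Downarrow(n_\ell)^{pc}$ if $e\Downarrow r^\ell$ with store $\Sigma'$ and $n=|\Sigma'(\ell)|$, final store $\Sigma'[\ell\mapsto\Sigma'(\ell)[n\mapsto r]]$; $!e\Downarrow r^{\ell\sqcup\ell'}$ if $e\Downarrow(n_\ell)^{\ell'}$ with store $\Sigma'$ and $\Sigma'(\ell)[n]=r$; $e_1:=e_2\Downarrow()^{pc}$ if $e_1\Downarrow(n_\ell)^{\ell_1}$, $\ell_1\sqsubseteq\ell$, $e_2\Downarrow r^{\ell_2}$ with store $\Sigma''$, $\ell_2\sqsubseteq\ell$, final store $\Sigma''[\ell\mapsto\Sigma''(\ell)[n\mapsto r]]$; $\mathbf{labelOfRef}(e)\Downarrow\ell^{\ell\sqcup\ell'}$ if $e\Downarrow(n_\ell)^{\ell'}$. *)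

theory Defs
  imports Main
begin

text \<open>Syntax of the fine-grained calculus lambda-dFG with flow-insensitive references.
  Labels range over an arbitrary lattice 'l (order = flows-to, sup = join).\<close>

type_synonym var = string

datatype 'l expr =
    Var var
  | Lam var "'l expr"
  | App "'l expr" "'l expr"
  | UnitE
  | LabE 'l
  | PairE "'l expr" "'l expr"
  | Fst "'l expr"
  | Snd "'l expr"
  | InlE "'l expr"
  | InrE "'l expr"
  | Case "'l expr" var "'l expr" var "'l expr"
  | GetLabel
  | LabelOf "'l expr"
  | LabelLe "'l expr" "'l expr"
  | Taint "'l expr" "'l expr"
  | New "'l expr"
  | Deref "'l expr"
  | Assign "'l expr" "'l expr"
  | LabelOfRef "'l expr"

datatype 'l raw =
    UnitV
  | Clo var "'l expr" "var \<rightharpoonup> 'l lval"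
  | InlV "'l lval"
  | InrV "'l lval"
  | PairV "'l lval" "'l lval"
  | LabV 'l
  | RefV nat 'l
and 'l lval = Val "'l raw" 'l

type_synonym 'l env = "var \<rightharpoonup> 'l lval"

type_synonym 'l store = "'l \<Rightarrow> 'l raw list"

fun joinv :: "'l::lattice lval \<Rightarrow> 'l \<Rightarrow> 'l lval" where
  "joinv (Val r l) l' = Val r (sup l l')"

definition mupd :: "'a list \<Rightarrow> nat \<Rightarrow> 'a \<Rightarrow> 'a list" where
  "mupd M n r = (if n = length M then M @ [r] else M[n := r])"

text \<open>Big-step evaluation: eval S \<theta> pc e S' v  means  <S,e> \<Down>^\<theta>_pc <S',v>.\<close>
inductive eval :: "'l::lattice store \<Rightarrow> 'l env \<Rightarrow> 'l \<Rightarrow> 'l expr \<Rightarrow> 'l store \<Rightarrow> 'l lval \<Rightarrow> bool" where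
  EVar: "\<theta> x = Some v \<Longrightarrow> eval S \<theta> pc (Var x) S (joinv v pc)"
| EUnit: "eval S \<theta> pc UnitE S (Val UnitV pc)"
| ELab: "eval S \<theta> pc (LabE l) S (Val (LabV l) pc)"
| ELam: "eval S \<theta> pc (Lam x e) S (Val (Clo x e \<theta>) pc)"
| EGetLabel: "eval S \<theta> pc GetLabel S (Val (LabV pc) pc)"
| EApp: "\<lbrakk> eval S \<theta> pc e1 S1 (Val (Clo x e \<theta>') l);
          eval S1 \<theta> pc e2 S2 v2;
          eval S2 (\<theta>'(x \<mapsto> v2)) (sup pc l) e S3 v \<rbrakk>
         \<Longrightarrow> eval S \<theta> pc (App e1 e2) S3 v"
| EInl: "eval S \<theta> pc e S1 v \<Longrightarrow> eval S \<theta> pc (InlE e) S1 (Val (InlV v) pc)"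
| EInr: "eval S \<theta> pc e S1 v \<Longrightarrow> eval S \<theta> pc (InrE e) S1 (Val (InrV v) pc)"
| ECaseL: "\<lbrakk> eval S \<theta> pc e S1 (Val (InlV v1) l);
           eval S1 (\<theta>(x \<mapsto> v1)) (sup pc l) e1 S2 v \<rbrakk>
          \<Longrightarrow> eval S \<theta> pc (Case e x e1 y e2) S2 v"
| ECaseR: "\<lbrakk> eval S \<theta> pc e S1 (Val (InrV v2) l);
           eval S1 (\<theta>(y \<mapsto> v2)) (sup pc l) e2 S2 v \<rbrakk>
          \<Longrightarrow> eval S \<theta> pc (Case e x e1 y e2) S2 v"
| EPair: "\<lbrakk> eval S \<theta> pc e1 S1 v1; eval S1 \<theta> pc e2 S2 v2 \<rbrakk>
          \<Longrightarrow> eval S \<theta> pc (PairE e1 e2) S2 (Val (PairV v1 v2) pc)"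
| EFst: "eval S \<theta> pc e S1 (Val (PairV v1 v2) l) \<Longrightarrow> eval S \<theta> pc (Fst e) S1 (joinv v1 l)"
| ESnd: "eval S \<theta> pc e S1 (Val (PairV v1 v2) l) \<Longrightarrow> eval S \<theta> pc (Snd e) S1 (joinv v2 l)"
| ELabelOf: "eval S \<theta> pc e S1 (Val r l) \<Longrightarrow> eval S \<theta> pc (LabelOf e) S1 (Val (LabV l) l)"
| ELabelLeT: "\<lbrakk> eval S \<theta> pc e1 S1 (Val (LabV l1) l1'); eval S1 \<theta> pc e2 S2 (Val (LabV l2) l2');
              l1 \<le> l2 \<rbrakk>
             \<Longrightarrow> eval S \<theta> pc (LabelLe e1 e2) S2 (Val (InlV (Val UnitV pc)) (sup l1' l2'))"
| ELabelLeF: "\<lbrakk> eval S \<theta> pc e1 S1 (Val (LabV l1) l1'); eval S1 \<theta> pc e2 S2 (Val (LabV l2) l2');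
              \<not> l1 \<le> l2 \<rbrakk>
             \<Longrightarrow> eval S \<theta> pc (LabelLe e1 e2) S2 (Val (InrV (Val UnitV pc)) (sup l1' l2'))"
| ETaint: "\<lbrakk> eval S \<theta> pc e1 S1 (Val (LabV l) l'); l' \<le> l; eval S1 \<theta> l e2 S2 v \<rbrakk>
           \<Longrightarrow> eval S \<theta> pc (Taint e1 e2) S2 v"
| ENew: "\<lbrakk> eval S \<theta> pc e S1 (Val r l); n = length (S1 l) \<rbrakk>
         \<Longrightarrow> eval S \<theta> pc (New e) (S1(l := mupd (S1 l) n r)) (Val (RefV n l) pc)"
| EDeref: "\<lbrakk> eval S \<theta> pc e S1 (Val (RefV n l) l'); n < length (S1 l); S1 l ! n = r \<rbrakk>
           \<Longrightarrow> eval S \<theta> pc (Deref e) S1 (Val r (sup l l'))"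
| EAssign: "\<lbrakk> eval S \<theta> pc e1 S1 (Val (RefV n l) l1); l1 \<le> l;
             eval S1 \<theta> pc e2 S2 (Val r l2); l2 \<le> l; n \<le> length (S2 l) \<rbrakk>
            \<Longrightarrow> eval S \<theta> pc (Assign e1 e2) (S2(l := mupd (S2 l) n r)) (Val UnitV pc)"
| ELabelOfRef: "eval S \<theta> pc e S1 (Val (RefV n l) l')
                \<Longrightarrow> eval S \<theta> pc (LabelOfRef e) S1 (Val (LabV l) (sup l l'))"

end

theory Submission
  imports Defs
begin

fun label :: "'l lval \<Rightarrow> 'l" where
  "label (Val r l) = l"

lemma label_joinv [simp]: "label (joinv v l) = sup (label v) l"
  by (cases v) simp

lemma eval_pc_le_label: "eval S \<theta> pc e S' v \<Longrightarrow> pc \<le> label v"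
proof (induction rule: eval.induct)
  case (ETaint S \<theta> pc e1 S1 l l' e2 S2 v)
  \<comment> \<open>The side condition of taint is exactly what keeps the new program counter above the old one.\<close>
  have "pc \<le> l'"
    using ETaint.IH(1) by simp
  with \<open>l' \<le> l\<close> ETaint.IH(2) show ?case
    by (meson order_trans)
qed (auto intro: le_supI1 le_supI2 order_trans)

theorem mainTheorem7:
  fixes S S' :: "'l::lattice store" and e :: "'l expr" and \<theta> :: "'l env"
    and pc l :: 'l and r :: "'l raw"
  assumes "eval S \<theta> pc e S' (Val r l)"
  shows "pc \<le> l"
  using eval_pc_le_label[OF assms] by simp

end
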